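(* Let $(h,n)=(3,2)$ and $U=\{id\}\times S_2\leq S_3\times S_2$. Then $U$ is a neutrality group with respect to $(3,2)$ but not a symmetry group with respect to $(3,2)$.
   Context: Permutations compose as $(\sigma\tau)(x)=\sigma(\tau(x))$. Let $G=S_h\times S_n$ and $\mathcal{P}=(S_n)^h$ (preference profiles), with $G$ acting by $(p^{(\varphi,\psi)})_i=\psi\,p_{\varphi^{-1}(i)}$. A social preference function (SPF) is any $F:\mathcal{P}\to S_n$; its symmetry group is $G(F)=\{(\varphi,\psi)\in G: F(p^{(\varphi,\psi)})=\psi F(p)\ \forall p\}$ and its neutrality group is $G_2(F)=G(F)\cap(\{id\}\times S_n)$. $U$ is a symmetry group (resp. neutrality group) with respect to $(h,n)$ if $U=G(F)$ (resp. $U=G_2(F)$) for some SPF $F$. *)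

theory Defs
  imports "HOL-Combinatorics.Permutations"
begin

text \<open>Voters are 0..<h, alternatives are 0..<n. S_k = permutations of {..<k}.
  A preference profile is a function assigning to each voter i<h a permutation of
  {..<n}; entries for i \<ge> h are fixed to id (canonical representation).\<close>

definition profiles :: "nat \<Rightarrow> nat \<Rightarrow> (nat \<Rightarrow> nat \<Rightarrow> nat) set" where
  "profiles h n = {p. (\<forall>i<h. p i permutes {..<n}) \<and> (\<forall>i\<ge>h. p i = id)}"

definition act :: "nat \<Rightarrow> (nat \<Rightarrow> nat) \<Rightarrow> (nat \<Rightarrow> nat) \<Rightarrow> (nat \<Rightarrow> nat \<Rightarrow> nat) \<Rightarrow> (nat \<Rightarrow> nat \<Rightarrow> nat)" where
  "act h \<phi> \<psi> p = (\<lambda>i. if i < h then \<psi> \<circ> p (inv \<phi> i) else id)"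

text \<open>An SPF maps every profile to a permutation of the alternatives
  (its values outside profiles are irrelevant).\<close>
definition is_SPF :: "nat \<Rightarrow> nat \<Rightarrow> ((nat \<Rightarrow> nat \<Rightarrow> nat) \<Rightarrow> (nat \<Rightarrow> nat)) \<Rightarrow> bool" where
  "is_SPF h n F \<longleftrightarrow> (\<forall>p\<in>profiles h n. F p permutes {..<n})"

definition sym_group :: "nat \<Rightarrow> nat \<Rightarrow> ((nat \<Rightarrow> nat \<Rightarrow> nat) \<Rightarrow> (nat \<Rightarrow> nat))
    \<Rightarrow> ((nat \<Rightarrow> nat) \<times> (nat \<Rightarrow> nat)) set" where
  "sym_group h n F = {(\<phi>, \<psi>). \<phi> permutes {..<h} \<and> \<psi> permutes {..<n} \<and>
      (\<forall>p\<in>profiles h n. F (act h \<phi> \<psi> p) = \<psi> \<circ> F p)}"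

definition neut_group :: "nat \<Rightarrow> nat \<Rightarrow> ((nat \<Rightarrow> nat \<Rightarrow> nat) \<Rightarrow> (nat \<Rightarrow> nat))
    \<Rightarrow> ((nat \<Rightarrow> nat) \<times> (nat \<Rightarrow> nat)) set" where
  "neut_group h n F = sym_group h n F \<inter> ({id} \<times> {\<psi>. \<psi> permutes {..<n}})"

definition is_symmetry_group :: "nat \<Rightarrow> nat \<Rightarrow> ((nat \<Rightarrow> nat) \<times> (nat \<Rightarrow> nat)) set \<Rightarrow> bool" where
  "is_symmetry_group h n U \<longleftrightarrow> (\<exists>F. is_SPF h n F \<and> U = sym_group h n F)"

definition is_neutrality_group :: "nat \<Rightarrow> nat \<Rightarrow> ((nat \<Rightarrow> nat) \<times> (nat \<Rightarrow> nat)) set \<Rightarrow> bool" where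
  "is_neutrality_group h n U \<longleftrightarrow> (\<exists>F. is_SPF h n F \<and> U = neut_group h n F)"

end

theory Submission
  imports Defs
begin

text \<open>
  The dictatorship of voter 0 satisfies \<open>F (\<psi> p) = \<psi> F p\<close> for every \<open>\<psi>\<close>, so its
  neutrality group is all of \<open>{id} \<times> S\<^sub>n\<close>.

  For the second claim, identify a profile in \<open>(S\<^sub>2)\<^sup>3\<close> with the set \<open>A\<close> of voters
  ranking by the transposition \<open>\<tau>\<close>: a voter permutation \<open>\<phi>\<close> maps \<open>A\<close> to \<open>\<phi> ` A\<close>,
  and \<open>\<tau>\<close> acting on the alternatives maps \<open>A\<close> to its complement. Every set of three
  voters is empty, a singleton, or the complement of one of these. Hence, if \<open>(id, \<tau>) \<in> G(F)\<close>,
  a voter permutation \<open>\<phi>\<close> lies in \<open>G(F)\<close> as soon as \<open>F\<close> agrees on \<open>{k}\<close> and \<open>{\<phi> k}\<close>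
  for every voter \<open>k\<close>. The three values of \<open>F\<close> on singletons lie in \<open>S\<^sub>2\<close>, so two of
  them agree, say at \<open>i\<close> and \<open>j\<close>, and the voter transposition \<open>(i j)\<close> lies in \<open>G(F)\<close>.
\<close>

abbreviation tau :: "nat \<Rightarrow> nat" where
  "tau \<equiv> Transposition.transpose 0 1"

lemma permutes_lessThan_2_cases:
  assumes "\<psi> permutes {..<2::nat}"
  shows "\<psi> = id \<or> \<psi> = tau"
proof -
  have fixed: "\<psi> x = x" if "x \<ge> 2" for x
    using assms that unfolding permutes_def by auto
  have "\<psi> 0 < 2" "\<psi> 1 < 2"
    using permutes_in_image[OF assms] by auto
  moreover have "\<psi> 0 \<noteq> \<psi> 1"
    using permutes_inj[OF assms] by (metis inj_eq zero_neq_one)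
  ultimately consider "\<psi> 0 = 0" "\<psi> 1 = 1" | "\<psi> 0 = 1" "\<psi> 1 = 0"
    by linarith
  then show ?thesis
  proof cases
    case 1
    have "\<psi> x = id x" for x
      using 1 fixed by (cases "x < 2") (auto simp: less_2_cases_iff)
    then show ?thesis by auto
  next
    case 2
    have "\<psi> x = tau x" for x
      using 2 fixed by (cases "x < 2") (auto simp: less_2_cases_iff transpose_def)
    then show ?thesis by auto
  qed
qed

lemma dictator_neut_group:
  assumes "0 < h"
  shows "neut_group h n (\<lambda>p. p 0) = {id} \<times> {\<psi>. \<psi> permutes {..<n}}"
  using assms unfolding neut_group_def sym_group_def act_def by (auto simp: permutes_id)

lemma is_neutrality_group_full:
  assumes "0 < h"
  shows "is_neutrality_group h n ({id} \<times> {\<psi>. \<psi> permutes {..<n}})"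
proof -
  have "is_SPF h n (\<lambda>p. p 0)"
    using assms unfolding is_SPF_def profiles_def by auto
  then show ?thesis
    using dictator_neut_group[OF assms] unfolding is_neutrality_group_def by metis
qed

definition profile_of_set :: "nat \<Rightarrow> nat set \<Rightarrow> nat \<Rightarrow> nat \<Rightarrow> nat" where
  "profile_of_set h A = (\<lambda>i. if i < h \<and> i \<in> A then tau else id)"

lemma profile_of_set_in_profiles: "profile_of_set h A \<in> profiles h 2"
  unfolding profiles_def profile_of_set_def by (auto simp: permutes_id permutes_swap_id)

lemma profiles_2_eq_profile_of_set:
  assumes "p \<in> profiles h 2"
  shows "p = profile_of_set h {i. p i = tau}"
proof
  fix i
  show "p i = profile_of_set h {i. p i = tau} i"
    using assms permutes_lessThan_2_cases[of "p i"]
    unfolding profiles_def profile_of_set_def by (cases "i < h") auto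
qed

lemma act_voters_profile_of_set:
  assumes "\<phi> permutes {..<h}"
  shows "act h \<phi> id (profile_of_set h A) = profile_of_set h (\<phi> ` A)"
proof -
  have "inv \<phi> i < h" if "i < h" for i
    using that permutes_in_image[OF permutes_inv[OF assms]] by simp
  moreover have "inv \<phi> i \<in> A \<longleftrightarrow> i \<in> \<phi> ` A" for i
    using permutes_inverses[OF assms] by (metis image_iff)
  ultimately show ?thesis
    unfolding act_def profile_of_set_def by auto
qed

lemma act_tau_profile_of_set:
  "act h id tau (profile_of_set h A) = profile_of_set h (- A)"
  unfolding act_def profile_of_set_def by (auto simp: fun_eq_iff)

lemma profile_of_set_Int_lessThan: "profile_of_set h (A \<inter> {..<h}) = profile_of_set h A"
  unfolding profile_of_set_def by auto

lemma subset_lessThan_3_cases: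
  assumes "A \<subseteq> {..<3::nat}"
  obtains "A = {}" | "A = {..<3}" | k where "k < 3" "A = {k}" | k where "k < 3" "A = {..<3} - {k}"
proof -
  have fin: "finite A"
    using assms finite_subset by blast
  have card_compl: "card ({..<3} - A) = 3 - card A"
    using assms by (simp add: card_Diff_subset fin)
  have "card A \<le> 3"
    using card_mono[OF _ assms] by simp
  then consider "card A = 0" | "card A = 1" | "card A = 2" | "card A = 3"
    by linarith
  then show ?thesis
  proof cases
    case 1
    then show ?thesis using that(1) fin by simp
  next
    case 2
    then obtain k where "A = {k}"
      by (rule card_1_singletonE)
    then show ?thesis using that(3) assms by simp
  next
    case 3
    then have "card ({..<3} - A) = 1"
      using card_compl by simp
    then obtain k where k: "{..<3} - A = {k}"
      by (rule card_1_singletonE)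
    then have "A = {..<3} - {k}" "k < 3"
      using assms by auto
    then show ?thesis using that(4) by blast
  next
    case 4
    then show ?thesis using that(2) assms by (simp add: card_subset_eq)
  qed
qed

lemma sym_group_voter_perm_if_singletons:
  assumes neutral: "(id, tau) \<in> sym_group 3 2 F" and \<phi>: "\<phi> permutes {..<3}"
    and singletons: "\<And>k. k < 3 \<Longrightarrow> F (profile_of_set 3 {\<phi> k}) = F (profile_of_set 3 {k})"
  shows "(\<phi>, id) \<in> sym_group 3 2 F"
proof -
  have compl: "F (profile_of_set 3 ({..<3} - {k})) = tau \<circ> F (profile_of_set 3 {k})" for k
  proof -
    have "profile_of_set 3 ({..<3} - {k}) = act 3 id tau (profile_of_set 3 {k})"
      unfolding act_tau_profile_of_set
      using profile_of_set_Int_lessThan[of 3 "- {k}"] by (simp add: Diff_eq Int_commute)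
    then show ?thesis
      using neutral profile_of_set_in_profiles unfolding sym_group_def by auto
  qed
  have invariant: "F (profile_of_set 3 (\<phi> ` A)) = F (profile_of_set 3 A)" if "A \<subseteq> {..<3}" for A
    using that
  proof (cases rule: subset_lessThan_3_cases)
    case 2
    then show ?thesis
      using permutes_image[OF \<phi>] by simp
  next
    case (4 k)
    have "\<phi> ` ({..<3} - {k}) = {..<3} - {\<phi> k}"
      using permutes_image[OF \<phi>] permutes_inj[OF \<phi>] by (simp add: image_set_diff)
    then show ?thesis
      using 4 compl singletons by simp
  qed (use singletons in simp_all)
  show ?thesis
    unfolding sym_group_def
  proof (simp add: \<phi> permutes_id, intro ballI)
    fix p
    assume p: "p \<in> profiles 3 2"
    define A where "A = {i. p i = tau} \<inter> {..<3}"
    have p_eq: "p = profile_of_set 3 A"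
      using profiles_2_eq_profile_of_set[OF p] profile_of_set_Int_lessThan unfolding A_def by metis
    then have "F (act 3 \<phi> id p) = F (profile_of_set 3 (\<phi> ` A))"
      by (simp add: act_voters_profile_of_set[OF \<phi>])
    also have "\<dots> = F p"
      using invariant[of A] p_eq unfolding A_def by simp
    finally show "F (act 3 \<phi> id p) = F p" .
  qed
qed

lemma singleton_values_collide:
  assumes "is_SPF 3 2 F"
  obtains i j where "i < 3" "j < 3" "i \<noteq> j" "F (profile_of_set 3 {i}) = F (profile_of_set 3 {j})"
proof -
  have "F (profile_of_set 3 {k}) \<in> {id, tau}" for k
    using assms profile_of_set_in_profiles permutes_lessThan_2_cases
    unfolding is_SPF_def by blast
  from this[of 0] this[of 1] this[of 2]
  consider "F (profile_of_set 3 {0}) = F (profile_of_set 3 {1})"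
    | "F (profile_of_set 3 {0}) = F (profile_of_set 3 {2})"
    | "F (profile_of_set 3 {1}) = F (profile_of_set 3 {2})"
    by (elim insertE) auto
  then show ?thesis
    by cases (erule that[rotated 3]; simp)+
qed

lemma neutral_SPF_has_voter_symmetry:
  assumes "is_SPF 3 2 F" "(id, tau) \<in> sym_group 3 2 F"
  shows "\<exists>\<phi>. \<phi> \<noteq> id \<and> (\<phi>, id) \<in> sym_group 3 2 F"
proof -
  obtain i j where ij: "i < 3" "j < 3" "i \<noteq> j"
    and collide: "F (profile_of_set 3 {i}) = F (profile_of_set 3 {j})"
    using singleton_values_collide[OF assms(1)] by blast
  have "(Transposition.transpose i j, id) \<in> sym_group 3 2 F"
  proof (rule sym_group_voter_perm_if_singletons[OF assms(2)])
    show "Transposition.transpose i j permutes {..<3}"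
      using ij by (simp add: permutes_swap_id)
    show "F (profile_of_set 3 {Transposition.transpose i j k}) = F (profile_of_set 3 {k})" for k
      using collide by (cases "k = i"; cases "k = j") simp_all
  qed
  moreover have "Transposition.transpose i j \<noteq> id"
    using ij by (simp add: transpose_eq_id_iff)
  ultimately show ?thesis by blast
qed

theorem mainTheorem9:
  defines "U \<equiv> {id} \<times> {\<psi>. \<psi> permutes {..<(2::nat)}}"
  shows "is_neutrality_group 3 2 U \<and> \<not> is_symmetry_group 3 2 U"
proof
  show "is_neutrality_group 3 2 U"
    unfolding U_def by (rule is_neutrality_group_full) simp
  show "\<not> is_symmetry_group 3 2 U"
  proof
    assume "is_symmetry_group 3 2 U"
    then obtain F where F: "is_SPF 3 2 F" and U: "U = sym_group 3 2 F"
      unfolding is_symmetry_group_def by blast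
    have "(id, tau) \<in> U"
      unfolding U_def by (simp add: permutes_swap_id)
    then obtain \<phi> where "\<phi> \<noteq> id" "(\<phi>, id) \<in> U"
      using neutral_SPF_has_voter_symmetry[OF F] unfolding U by blast
    then show False
      unfolding U_def by simp
  qed
qed

end
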